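(* Let $\hat N=\sum_{j\ge0}\hat n_j$ be the particle number operator and $\overline N=\langle\hat N\rangle_{\mathrm{gc}}$. Then $$\langle(\hat N-\overline N)^4\rangle_{\mathrm{gc}}\le9\langle(\hat N-\overline N)^2\rangle_{\mathrm{gc}}^2+\langle(\hat N-\overline N)^2\rangle_{\mathrm{gc}}.$$
   Context: Fix a nondecreasing sequence $(E_j)_{j\ge0}$ of nonnegative one-particle energies (temperature absorbed) and $\mu<E_0$. $\hat n_j=a_j^*a_j$ is the occupation number operator of level $j$ on bosonic Fock space, and $\langle\cdot\rangle_{\mathrm{gc}}$ is the expectation in the grand canonical Gibbs state $Z_{\mathrm{gc}}(\mu)^{-1}\exp(-\sum_j(E_j-\mu)\hat n_j)$, assumed to have finite partition function and moments. *)

theory Defs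
  imports "HOL-Analysis.Analysis"
begin

text \<open>Bosonic Fock space is spanned by the occupation-number basis vectors, indexed by
finitely supported occupation configurations. The grand canonical Gibbs state and the
operators n_j and N are all diagonal in this basis, so expectations of functions of the
total particle number operator are weighted sums over configurations.\<close>

definition occ_configs :: "(nat \<Rightarrow> nat) set" where
  "occ_configs = {n. finite {j. n j \<noteq> 0}}"

definition Ntot :: "(nat \<Rightarrow> nat) \<Rightarrow> nat" where
  "Ntot n = (\<Sum>j\<in>{j. n j \<noteq> 0}. n j)"

definition gibbs_weight :: "(nat \<Rightarrow> real) \<Rightarrow> real \<Rightarrow> (nat \<Rightarrow> nat) \<Rightarrow> real" where
  "gibbs_weight E \<mu> n = exp (- (\<Sum>j\<in>{j. n j \<noteq> 0}. (E j - \<mu>) * real (n j)))"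

definition Z_gc :: "(nat \<Rightarrow> real) \<Rightarrow> real \<Rightarrow> real" where
  "Z_gc E \<mu> = infsum (gibbs_weight E \<mu>) occ_configs"

definition gc_expect :: "(nat \<Rightarrow> real) \<Rightarrow> real \<Rightarrow> (real \<Rightarrow> real) \<Rightarrow> real" where
  "gc_expect E \<mu> f =
     infsum (\<lambda>n. gibbs_weight E \<mu> n * f (real (Ntot n))) occ_configs / Z_gc E \<mu>"

end

theory Submission
  imports Defs
begin

text \<open>Adding a particle to level \<open>j\<close> is a bijection from all configurations onto those with
\<open>n\<^sub>j > 0\<close> and multiplies the Gibbs weight by \<open>q\<^sub>j = exp (\<mu> - E\<^sub>j)\<close>. Hence
\<open>\<langle>n\<^sub>j g(N)\<rangle> = q\<^sub>j \<langle>(n\<^sub>j + 1) g(N + 1)\<rangle>\<close>, and with \<open>g = x\<^sup>k\<close> the mixed moments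
\<open>\<langle>n\<^sub>j N\<^sup>k\<rangle>\<close> are determined recursively by \<open>c\<^sub>j = \<langle>n\<^sub>j\<rangle>\<close> and the moments of \<open>N\<close>.
Summing over the levels, the fourth central moment of \<open>N\<close> equals \<open>3V\<^sup>2 + V + 6 \<Sum>\<^sub>j d\<^sub>j\<^sup>2\<close>,
where \<open>d\<^sub>j = c\<^sub>j (c\<^sub>j + 1) \<ge> 0\<close> is the covariance of \<open>n\<^sub>j\<close> and \<open>N\<close> and \<open>\<Sum>\<^sub>j d\<^sub>j = V\<close> is the
variance. As every \<open>d\<^sub>j \<le> V\<close>, \<open>\<Sum>\<^sub>j d\<^sub>j\<^sup>2 \<le> V\<^sup>2\<close>. (In probabilistic terms: \<open>N\<close> is a sum of
independent geometric variables, whose fourth cumulants are \<open>d\<^sub>j (6 d\<^sub>j + 1)\<close>.)\<close>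

lemma occ_configs_fun_upd: "m \<in> occ_configs \<Longrightarrow> m(j := k) \<in> occ_configs"
proof -
  assume "m \<in> occ_configs"
  then have "finite (insert j {i. m i \<noteq> 0})" by (simp add: occ_configs_def)
  moreover have "{i. (m(j := k)) i \<noteq> 0} \<subseteq> insert j {i. m i \<noteq> 0}" by auto
  ultimately have "finite {i. (m(j := k)) i \<noteq> 0}" by (rule finite_subset[rotated])
  then show ?thesis by (simp add: occ_configs_def)
qed

lemma support_sum_fun_upd_Suc:
  fixes f :: "nat \<Rightarrow> real" and j :: nat
  assumes "m \<in> occ_configs"
  defines "m' \<equiv> m(j := Suc (m j))"
  shows "(\<Sum>i\<in>{i. m' i \<noteq> 0}. f i * real (m' i)) = f j + (\<Sum>i\<in>{i. m i \<noteq> 0}. f i * real (m i))"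
proof -
  define S where "S = insert j {i. m i \<noteq> 0}"
  have "finite S" using assms by (simp add: S_def occ_configs_def)
  have "(\<Sum>i\<in>{i. m' i \<noteq> 0}. f i * real (m' i)) = (\<Sum>i\<in>S. f i * real (m' i))"
    using \<open>finite S\<close> by (intro sum.mono_neutral_left) (auto simp: S_def m'_def)
  also have "\<dots> = (\<Sum>i\<in>S. f i * real (m i) + (if i = j then f j else 0))"
    by (intro sum.cong) (auto simp: m'_def algebra_simps)
  also have "\<dots> = f j + (\<Sum>i\<in>S. f i * real (m i))"
    using \<open>finite S\<close> by (simp add: sum.distrib S_def)
  also have "(\<Sum>i\<in>S. f i * real (m i)) = (\<Sum>i\<in>{i. m i \<noteq> 0}. f i * real (m i))"
    using \<open>finite S\<close> by (intro sum.mono_neutral_right) (auto simp: S_def)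
  finally show ?thesis .
qed

lemma Ntot_fun_upd_Suc:
  assumes "m \<in> occ_configs"
  shows "Ntot (m(j := Suc (m j))) = Suc (Ntot m)"
proof -
  have "real (Ntot (m(j := Suc (m j)))) = 1 + real (Ntot m)"
    using support_sum_fun_upd_Suc[OF assms, of "\<lambda>_. 1" j] by (simp add: Ntot_def)
  then show ?thesis by linarith
qed

lemma gibbs_weight_fun_upd_Suc:
  assumes "m \<in> occ_configs"
  shows "gibbs_weight E \<mu> (m(j := Suc (m j))) = exp (\<mu> - E j) * gibbs_weight E \<mu> m"
  unfolding gibbs_weight_def support_sum_fun_upd_Suc[OF assms] by (simp add: exp_add[symmetric])

lemma gibbs_weight_pos: "gibbs_weight E \<mu> n > 0"
  by (simp add: gibbs_weight_def)

lemma occ_le_Ntot: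
  assumes "n \<in> occ_configs"
  shows "n j \<le> Ntot n"
proof (cases "n j = 0")
  case False
  then show ?thesis
    using assms unfolding Ntot_def occ_configs_def by (intro member_le_sum) auto
qed simp

lemma has_sum_occ_Ntot:
  assumes "n \<in> occ_configs"
  shows "((\<lambda>j. real (n j)) has_sum real (Ntot n)) UNIV"
proof -
  have "((\<lambda>j. real (n j)) has_sum real (Ntot n)) {j. n j \<noteq> 0}"
    using assms unfolding Ntot_def occ_configs_def by (simp add: has_sum_finite)
  then show ?thesis by (rule has_sum_cong_neutral[THEN iffD1, rotated -1]) auto
qed

lemma summable_on_sum:
  fixes f :: "'i \<Rightarrow> 'a \<Rightarrow> 'b::{topological_comm_monoid_add, t2_space}"
  shows "finite I \<Longrightarrow> (\<And>i. i \<in> I \<Longrightarrow> f i summable_on A) \<Longrightarrow> (\<lambda>x. \<Sum>i\<in>I. f i x) summable_on A"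
  by (induction I rule: finite_induct) (simp_all add: summable_on_add)

lemma summable_on_power_le:
  fixes w x :: "'a \<Rightarrow> real"
  assumes w_nonneg: "\<And>a. 0 \<le> w a" and x_nonneg: "\<And>a. 0 \<le> x a"
    and "w summable_on A" and "(\<lambda>a. w a * x a ^ K) summable_on A" and "k \<le> K"
  shows "(\<lambda>a. w a * x a ^ k) summable_on A"
proof (rule summable_on_comparison_test)
  show "(\<lambda>a. w a + w a * x a ^ K) summable_on A"
    using assms by (intro summable_on_add)
  fix a
  show "0 \<le> w a * x a ^ k" using w_nonneg[of a] x_nonneg[of a] by simp
  have "x a ^ k \<le> 1 + x a ^ K"
  proof (cases "x a \<le> 1")
    case True
    then have "x a ^ k \<le> 1" using x_nonneg by (simp add: power_le_one)
    then show ?thesis using x_nonneg[of a] by (simp add: add_increasing2)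
  next
    case False
    then have "x a ^ k \<le> x a ^ K" using \<open>k \<le> K\<close> by (intro power_increasing) auto
    then show ?thesis by simp
  qed
  from mult_left_mono[OF this w_nonneg]
  show "w a * x a ^ k \<le> w a + w a * x a ^ K"
    by (simp add: distrib_left)
qed

lemma summable_on_occ_level:
  fixes w :: "(nat \<Rightarrow> nat) \<Rightarrow> real"
  assumes w_nonneg: "\<And>n. 0 \<le> w n"
    and "(\<lambda>n. w n * real (Ntot n) ^ Suc k) summable_on occ_configs"
  shows "(\<lambda>n. w n * real (n j) * real (Ntot n) ^ k) summable_on occ_configs"
proof (rule summable_on_comparison_test[OF assms(2)])
  fix n assume "n \<in> occ_configs"
  show "0 \<le> w n * real (n j) * real (Ntot n) ^ k" using w_nonneg[of n] by simp
  from \<open>n \<in> occ_configs\<close> have "real (n j) \<le> real (Ntot n)" by (simp add: occ_le_Ntot)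
  then show "w n * real (n j) * real (Ntot n) ^ k \<le> w n * real (Ntot n) ^ Suc k"
    using w_nonneg[of n] by (simp add: mult_left_mono mult_right_mono mult.assoc)
qed

lemma has_sum_occ_levels:
  fixes w g :: "(nat \<Rightarrow> nat) \<Rightarrow> real"
  assumes w_nonneg: "\<And>n. 0 \<le> w n"
    and summable: "(\<lambda>n. w n * real (Ntot n) * \<bar>g n\<bar>) summable_on occ_configs"
  shows "((\<lambda>j. infsum (\<lambda>n. w n * real (n j) * g n) occ_configs)
          has_sum infsum (\<lambda>n. w n * real (Ntot n) * g n) occ_configs) UNIV"
proof -
  define F where "F = (\<lambda>(n::nat\<Rightarrow>nat, j::nat). w n * real (n j) * g n)"
  have levels: "((\<lambda>j. w n * real (n j) * c) has_sum (w n * real (Ntot n) * c)) UNIV"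
    if "n \<in> occ_configs" for n c
    using has_sum_cmult_left[OF has_sum_cmult_right[OF has_sum_occ_Ntot[OF that]]] by simp
  have "(\<lambda>(n, j). w n * real (n j) * \<bar>g n\<bar>) summable_on occ_configs \<times> UNIV"
    by (rule summable_on_SigmaI[OF _ summable]) (auto intro: levels simp: w_nonneg)
  then have "(\<lambda>p. norm (F p)) summable_on occ_configs \<times> UNIV"
    by (rule summable_on_cong[THEN iffD1, rotated]) (auto simp: F_def abs_mult w_nonneg)
  then have "F summable_on occ_configs \<times> UNIV"
    using summable_on_iff_abs_summable_on_real by blast
  then have F_sum: "(F has_sum infsum F (occ_configs \<times> UNIV)) (occ_configs \<times> UNIV)"
    by simp
  have F_swap: "((\<lambda>(j, n). F (n, j)) has_sum infsum F (occ_configs \<times> UNIV)) (UNIV \<times> occ_configs)"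
    using F_sum has_sum_swap by fastforce
  have "((\<lambda>n. w n * real (Ntot n) * g n) has_sum infsum F (occ_configs \<times> UNIV)) occ_configs"
    by (rule has_sum_Sigma'[OF F_sum]) (auto simp: F_def intro: levels)
  moreover have "((\<lambda>j. infsum (\<lambda>n. w n * real (n j) * g n) occ_configs)
          has_sum infsum F (occ_configs \<times> UNIV)) UNIV"
  proof (rule has_sum_Sigma'[OF F_swap])
    fix j :: nat
    have "(\<lambda>n. F (n, j)) summable_on occ_configs"
      using summable_on_SigmaD1[of "\<lambda>j n. F (n, j)" UNIV "\<lambda>_. occ_configs" j] F_swap
      by (auto simp: summable_on_def)
    then show "((\<lambda>n. case (j, n) of (j, n) \<Rightarrow> F (n, j))
        has_sum infsum (\<lambda>n. w n * real (n j) * g n) occ_configs) occ_configs"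
      by (simp add: F_def)
  qed
  ultimately show ?thesis by (simp add: infsumI)
qed

definition gc_mean :: "(nat \<Rightarrow> real) \<Rightarrow> real \<Rightarrow> ((nat \<Rightarrow> nat) \<Rightarrow> real) \<Rightarrow> real" where
  "gc_mean E \<mu> f = infsum (\<lambda>n. gibbs_weight E \<mu> n * f n) occ_configs / Z_gc E \<mu>"

abbreviation gc_summable :: "(nat \<Rightarrow> real) \<Rightarrow> real \<Rightarrow> ((nat \<Rightarrow> nat) \<Rightarrow> real) \<Rightarrow> bool" where
  "gc_summable E \<mu> f \<equiv> (\<lambda>n. gibbs_weight E \<mu> n * f n) summable_on occ_configs"

lemma gc_expect_eq_gc_mean: "gc_expect E \<mu> g = gc_mean E \<mu> (\<lambda>n. g (real (Ntot n)))"
  by (simp add: gc_expect_def gc_mean_def)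

lemma gc_mean_cmult: "gc_mean E \<mu> (\<lambda>n. c * f n) = c * gc_mean E \<mu> f"
  by (simp add: gc_mean_def mult.left_commute infsum_cmult_right')

lemma gc_mean_add:
  assumes "gc_summable E \<mu> f" and "gc_summable E \<mu> g"
  shows "gc_mean E \<mu> (\<lambda>n. f n + g n) = gc_mean E \<mu> f + gc_mean E \<mu> g"
  using infsum_add[OF assms] by (simp add: gc_mean_def distrib_left add_divide_distrib)

lemma gc_mean_sum:
  assumes "finite I" and "\<And>i. i \<in> I \<Longrightarrow> gc_summable E \<mu> (f i)"
  shows "gc_mean E \<mu> (\<lambda>n. \<Sum>i\<in>I. f i n) = (\<Sum>i\<in>I. gc_mean E \<mu> (f i))"
  using assms
proof (induction I rule: finite_induct)
  case empty
  then show ?case by (simp add: gc_mean_def)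
next
  case (insert i I)
  have "gc_summable E \<mu> (\<lambda>n. \<Sum>i\<in>I. f i n)"
    using insert by (simp add: sum_distrib_left summable_on_sum)
  then show ?case
    using insert by (simp add: gc_mean_add)
qed

lemma gc_mean_nonneg: "(\<And>n. 0 \<le> f n) \<Longrightarrow> 0 \<le> gc_mean E \<mu> f"
  unfolding gc_mean_def Z_gc_def
  by (intro divide_nonneg_nonneg infsum_nonneg mult_nonneg_nonneg) (auto intro: less_imp_le gibbs_weight_pos)

lemma Z_gc_ge_1:
  assumes "gibbs_weight E \<mu> summable_on occ_configs"
  shows "1 \<le> Z_gc E \<mu>"
proof -
  have "(\<lambda>_. 0) \<in> occ_configs" by (simp add: occ_configs_def)
  moreover have "gibbs_weight E \<mu> (\<lambda>_. 0) = 1" by (simp add: gibbs_weight_def)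
  ultimately have "infsum (gibbs_weight E \<mu>) {\<lambda>_. 0} \<le> infsum (gibbs_weight E \<mu>) occ_configs"
    using assms by (intro infsum_mono_neutral) (auto intro: less_imp_le gibbs_weight_pos)
  then show ?thesis using \<open>gibbs_weight E \<mu> (\<lambda>_. 0) = 1\<close> by (simp add: Z_gc_def)
qed

lemma gc_mean_one:
  assumes "gibbs_weight E \<mu> summable_on occ_configs"
  shows "gc_mean E \<mu> (\<lambda>_. 1) = 1"
  using Z_gc_ge_1[OF assms] by (simp add: gc_mean_def Z_gc_def)

lemma infsum_gibbs_shift:
  fixes g :: "nat \<Rightarrow> real"
  shows "infsum (\<lambda>n. gibbs_weight E \<mu> n * (real (n j) * g (Ntot n))) occ_configs
     = exp (\<mu> - E j) * infsum (\<lambda>n. gibbs_weight E \<mu> n * ((real (n j) + 1) * g (Suc (Ntot n)))) occ_configs"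
proof -
  define T where "T = {n \<in> occ_configs. n j \<noteq> 0}"
  have "infsum (\<lambda>n. gibbs_weight E \<mu> n * (real (n j) * g (Ntot n))) occ_configs
      = infsum (\<lambda>n. gibbs_weight E \<mu> n * (real (n j) * g (Ntot n))) T"
    by (rule infsum_cong_neutral) (auto simp: T_def)
  also have "\<dots> = infsum (\<lambda>n. exp (\<mu> - E j) * (gibbs_weight E \<mu> n * ((real (n j) + 1) * g (Suc (Ntot n))))) occ_configs"
  proof (rule infsum_reindex_bij_witness[symmetric, where i="\<lambda>n. n(j := n j - 1)" and j="\<lambda>n. n(j := Suc (n j))"])
    fix a assume a: "a \<in> occ_configs"
    show "(a(j := Suc (a j)))(j := (a(j := Suc (a j))) j - 1) = a" by simp
    show "a(j := Suc (a j)) \<in> T" using a by (simp add: T_def occ_configs_fun_upd)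
    show "gibbs_weight E \<mu> (a(j := Suc (a j))) * (real ((a(j := Suc (a j))) j) * g (Ntot (a(j := Suc (a j)))))
        = exp (\<mu> - E j) * (gibbs_weight E \<mu> a * ((real (a j) + 1) * g (Suc (Ntot a))))"
      using a by (simp add: gibbs_weight_fun_upd_Suc Ntot_fun_upd_Suc algebra_simps)
  next
    fix b assume b: "b \<in> T"
    show "(b(j := b j - 1))(j := Suc ((b(j := b j - 1)) j)) = b" using b by (auto simp: T_def)
    show "b(j := b j - 1) \<in> occ_configs" using b by (simp add: T_def occ_configs_fun_upd)
  qed
  also have "\<dots> = exp (\<mu> - E j) * infsum (\<lambda>n. gibbs_weight E \<mu> n * ((real (n j) + 1) * g (Suc (Ntot n)))) occ_configs"
    by (rule infsum_cmult_right')
  finally show ?thesis .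
qed

lemma gc_mean_shift:
  "gc_mean E \<mu> (\<lambda>n. real (n j) * g (Ntot n))
     = exp (\<mu> - E j) * gc_mean E \<mu> (\<lambda>n. (real (n j) + 1) * g (Suc (Ntot n)))"
  unfolding gc_mean_def infsum_gibbs_shift by simp

lemma gc_summable_Ntot_power:
  assumes "gibbs_weight E \<mu> summable_on occ_configs"
    and "gc_summable E \<mu> (\<lambda>n. real (Ntot n) ^ K)" and "k \<le> K"
  shows "gc_summable E \<mu> (\<lambda>n. real (Ntot n) ^ k)"
  using summable_on_power_le[of "gibbs_weight E \<mu>" "\<lambda>n. real (Ntot n)"] assms
  by (simp add: less_imp_le gibbs_weight_pos)

lemma gc_summable_level_Ntot_power:
  assumes "gc_summable E \<mu> (\<lambda>n. real (Ntot n) ^ Suc k)"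
  shows "gc_summable E \<mu> (\<lambda>n. real (n j) * real (Ntot n) ^ k)"
  using summable_on_occ_level[of "gibbs_weight E \<mu>" k j] assms
  by (simp add: less_imp_le gibbs_weight_pos mult.assoc)

lemma gc_mean_level_moment_shift:
  assumes Z_fin: "gibbs_weight E \<mu> summable_on occ_configs"
    and mom_fin: "gc_summable E \<mu> (\<lambda>n. real (Ntot n) ^ Suc k)"
  shows "gc_mean E \<mu> (\<lambda>n. real (n j) * real (Ntot n) ^ k)
    = exp (\<mu> - E j) * (\<Sum>i\<le>k. real (k choose i) *
        (gc_mean E \<mu> (\<lambda>n. real (n j) * real (Ntot n) ^ i) + gc_mean E \<mu> (\<lambda>n. real (Ntot n) ^ i)))"
proof -
  have level: "gc_summable E \<mu> (\<lambda>n. real (n j) * real (Ntot n) ^ i)"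
    and total: "gc_summable E \<mu> (\<lambda>n. real (Ntot n) ^ i)" if "i \<le> k" for i
    using that by (intro gc_summable_level_Ntot_power gc_summable_Ntot_power[OF Z_fin mom_fin]; simp)+
  have binomial: "(real (n j) + 1) * real (Suc (Ntot n)) ^ k
      = (\<Sum>i\<le>k. real (k choose i) * (real (n j) * real (Ntot n) ^ i + real (Ntot n) ^ i))" for n
  proof -
    have "real (Suc (Ntot n)) ^ k = (\<Sum>i\<le>k. real (k choose i) * real (Ntot n) ^ i)"
      using binomial_ring[of "real (Ntot n)" 1 k] by (simp add: add.commute)
    then show ?thesis by (simp add: sum_distrib_left sum.distrib algebra_simps)
  qed
  have "gc_mean E \<mu> (\<lambda>n. real (n j) * real (Ntot n) ^ k)
      = exp (\<mu> - E j) * gc_mean E \<mu> (\<lambda>n. (real (n j) + 1) * real (Suc (Ntot n)) ^ k)"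
    using gc_mean_shift[of E \<mu> j "\<lambda>x. real x ^ k"] by simp
  also have "gc_mean E \<mu> (\<lambda>n. (real (n j) + 1) * real (Suc (Ntot n)) ^ k)
      = (\<Sum>i\<le>k. gc_mean E \<mu> (\<lambda>n. real (k choose i) * (real (n j) * real (Ntot n) ^ i + real (Ntot n) ^ i)))"
  proof (unfold binomial, intro gc_mean_sum)
    fix i assume "i \<in> {..k}"
    then have "(\<lambda>n. real (k choose i) * (gibbs_weight E \<mu> n * (real (n j) * real (Ntot n) ^ i)
        + gibbs_weight E \<mu> n * real (Ntot n) ^ i)) summable_on occ_configs"
      using level total by (intro summable_on_cmult_right summable_on_add) auto
    then show "gc_summable E \<mu> (\<lambda>n. real (k choose i) * (real (n j) * real (Ntot n) ^ i + real (Ntot n) ^ i))"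
      by (simp add: algebra_simps)
  qed simp
  also have "\<dots> = (\<Sum>i\<le>k. real (k choose i) *
        (gc_mean E \<mu> (\<lambda>n. real (n j) * real (Ntot n) ^ i) + gc_mean E \<mu> (\<lambda>n. real (Ntot n) ^ i)))"
    using level total by (intro sum.cong) (simp_all add: gc_mean_cmult gc_mean_add)
  finally show ?thesis .
qed

lemma gc_mean_level_moment_recursion:
  assumes Z_fin: "gibbs_weight E \<mu> summable_on occ_configs"
    and mom_fin: "gc_summable E \<mu> (\<lambda>n. real (Ntot n) ^ Suc k)"
  shows "gc_mean E \<mu> (\<lambda>n. real (n j) * real (Ntot n) ^ k)
    = gc_mean E \<mu> (\<lambda>n. real (n j)) *
        ((\<Sum>i<k. real (k choose i) * gc_mean E \<mu> (\<lambda>n. real (n j) * real (Ntot n) ^ i))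
         + (\<Sum>i\<le>k. real (k choose i) * gc_mean E \<mu> (\<lambda>n. real (Ntot n) ^ i)))"
proof -
  define q where "q = exp (\<mu> - E j)"
  define c where "c = gc_mean E \<mu> (\<lambda>n. real (n j))"
  define p where "p = gc_mean E \<mu> (\<lambda>n. real (n j) * real (Ntot n) ^ k)"
  define r where "r = (\<Sum>i<k. real (k choose i) * gc_mean E \<mu> (\<lambda>n. real (n j) * real (Ntot n) ^ i))
         + (\<Sum>i\<le>k. real (k choose i) * gc_mean E \<mu> (\<lambda>n. real (Ntot n) ^ i))"
  have "gc_summable E \<mu> (\<lambda>n. real (Ntot n) ^ Suc 0)"
    using gc_summable_Ntot_power[OF Z_fin mom_fin, of "Suc 0"] by simp
  from gc_mean_level_moment_shift[OF Z_fin this, of j]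
  have c_eq: "c = q * (c + 1)"
    by (simp add: c_def q_def gc_mean_one[OF Z_fin])
  have p_eq: "p = q * (p + r)"
    using gc_mean_level_moment_shift[OF Z_fin mom_fin, of j]
    by (simp add: p_def q_def r_def lessThan_Suc_atMost[symmetric] sum.distrib distrib_left algebra_simps)
  \<comment> \<open>\<open>c_eq\<close> rules out \<open>q = 1\<close>; eliminating \<open>q\<close> between the two equations gives \<open>p = c r\<close>.\<close>
  have "(p - c * r) * (1 - q) = 0" using c_eq p_eq by algebra
  moreover have "q \<noteq> 1" using c_eq by auto
  ultimately show ?thesis by (simp add: p_def c_def r_def)
qed

lemma gc_mean_level_has_sum:
  assumes "gc_summable E \<mu> (\<lambda>n. real (Ntot n) ^ Suc k)"
  shows "((\<lambda>j. gc_mean E \<mu> (\<lambda>n. real (n j) * real (Ntot n) ^ k))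
          has_sum gc_mean E \<mu> (\<lambda>n. real (Ntot n) ^ Suc k)) UNIV"
proof -
  have "(\<lambda>n. gibbs_weight E \<mu> n * real (Ntot n) * \<bar>real (Ntot n) ^ k\<bar>) summable_on occ_configs"
    using assms by (simp add: mult.assoc)
  from has_sum_divide_const[OF has_sum_occ_levels[OF _ this], of "Z_gc E \<mu>"]
  show ?thesis
    by (simp add: gc_mean_def less_imp_le gibbs_weight_pos mult.assoc)
qed

lemma gc_expect_power_diff:
  assumes Z_fin: "gibbs_weight E \<mu> summable_on occ_configs"
    and mom_fin: "gc_summable E \<mu> (\<lambda>n. real (Ntot n) ^ K)"
  shows "gc_expect E \<mu> (\<lambda>x. (x - a) ^ K)
    = (\<Sum>i\<le>K. real (K choose i) * (- a) ^ (K - i) * gc_mean E \<mu> (\<lambda>n. real (Ntot n) ^ i))"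
proof -
  have "gc_expect E \<mu> (\<lambda>x. (x - a) ^ K)
      = gc_mean E \<mu> (\<lambda>n. \<Sum>i\<le>K. real (K choose i) * (- a) ^ (K - i) * real (Ntot n) ^ i)"
    unfolding gc_expect_eq_gc_mean
    using binomial_ring[of _ "- a" K] by (simp add: algebra_simps)
  also have "\<dots> = (\<Sum>i\<le>K. gc_mean E \<mu> (\<lambda>n. real (K choose i) * (- a) ^ (K - i) * real (Ntot n) ^ i))"
  proof (intro gc_mean_sum)
    fix i assume "i \<in> {..K}"
    then have "(\<lambda>n. real (K choose i) * (- a) ^ (K - i) * (gibbs_weight E \<mu> n * real (Ntot n) ^ i))
        summable_on occ_configs"
      by (intro summable_on_cmult_right gc_summable_Ntot_power[OF Z_fin mom_fin]) simp
    then show "gc_summable E \<mu> (\<lambda>n. real (K choose i) * (- a) ^ (K - i) * real (Ntot n) ^ i)"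
      by (simp add: ac_simps)
  qed simp
  finally show ?thesis by (simp add: gc_mean_cmult mult.assoc)
qed

lemma central_fourth_moment_le_of_levels:
  fixes c p1 p2 p3 :: "'a \<Rightarrow> real" and m1 m2 m3 m4 :: real
  assumes p1: "\<And>j. p1 j = c j * (c j + m1 + 1)"
    and p2: "\<And>j. p2 j = c j * (2 * p1 j + c j + m2 + 2 * m1 + 1)"
    and p3: "\<And>j. p3 j = c j * (3 * p2 j + 3 * p1 j + c j + m3 + 3 * m2 + 3 * m1 + 1)"
    and c_nonneg: "\<And>j. 0 \<le> c j"
    and sums: "(c has_sum m1) J" "(p1 has_sum m2) J" "(p2 has_sum m3) J" "(p3 has_sum m4) J"
  shows "m4 - 4 * m1 * m3 + 6 * m1 ^ 2 * m2 - 3 * m1 ^ 4 \<le> 9 * (m2 - m1 ^ 2) ^ 2 + (m2 - m1 ^ 2)"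
proof -
  define V where "V = m2 - m1 ^ 2"
  \<comment> \<open>the covariance \<open>\<langle>n\<^sub>j N\<rangle> - \<langle>n\<^sub>j\<rangle>\<langle>N\<rangle>\<close> of a level with the total number\<close>
  define d where "d j = c j * (c j + 1)" for j
  have d_nonneg: "0 \<le> d j" for j
    using c_nonneg[of j] by (simp add: d_def)
  have "((\<lambda>j. p1 j + (- m1) * c j) has_sum (m2 + (- m1) * m1)) J"
    by (intro has_sum_add has_sum_cmult_right sums)
  moreover have "d = (\<lambda>j. p1 j + (- m1) * c j)"
    by (simp add: fun_eq_iff d_def p1 algebra_simps)
  ultimately have d_sum: "(d has_sum V) J"
    by (simp add: V_def power2_eq_square)
  have d_le: "d j \<le> V" if "j \<in> J" for j
  proof (rule has_sum_mono_neutral[OF _ d_sum])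
    show "(d has_sum d j) {j}" by (simp add: has_sum_finite[of "{j}", simplified])
  qed (use that d_nonneg in auto)
  define M3 where "M3 = m3 - 3 * m1 * m2 + 2 * m1 ^ 3"
  have level: "6 * d j ^ 2 = p3 j + (- 3 * m1) * p2 j + (3 * m1 ^ 2) * p1 j + (- (m1 ^ 3) - M3) * c j
      + (- 3 * V - 1) * d j" for j
    using p1[of j] p2[of j] p3[of j] unfolding d_def V_def M3_def by algebra
  define T where "T = m4 + (- 3 * m1) * m3 + (3 * m1 ^ 2) * m2 + (- (m1 ^ 3) - M3) * m1 + (- 3 * V - 1) * V"
  have "((\<lambda>j. 6 * d j ^ 2) has_sum T) J"
    unfolding level T_def by (intro has_sum_add has_sum_cmult_right sums d_sum)
  moreover have "((\<lambda>j. 6 * V * d j) has_sum 6 * V * V) J"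
    by (intro has_sum_cmult_right d_sum)
  moreover have "6 * d j ^ 2 \<le> 6 * V * d j" if "j \<in> J" for j
    using mult_right_mono[OF d_le[OF that] d_nonneg[of j]] by (simp add: power2_eq_square)
  ultimately have "T \<le> 6 * V * V"
    by (rule has_sum_mono)
  moreover have "m4 - 4 * m1 * m3 + 6 * m1 ^ 2 * m2 - 3 * m1 ^ 4 - (9 * V ^ 2 + V) = T - 6 * V * V"
    unfolding T_def M3_def V_def by algebra
  ultimately show ?thesis unfolding V_def by linarith
qed

lemma gc_central_fourth_moment_le:
  assumes Z_fin: "gibbs_weight E \<mu> summable_on occ_configs"
    and mom_fin: "gc_summable E \<mu> (\<lambda>n. real (Ntot n) ^ 4)"
  defines "M \<equiv> \<lambda>k. gc_mean E \<mu> (\<lambda>n. real (Ntot n) ^ k)"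
  shows "M 4 - 4 * M 1 * M 3 + 6 * M 1 ^ 2 * M 2 - 3 * M 1 ^ 4 \<le> 9 * (M 2 - M 1 ^ 2) ^ 2 + (M 2 - M 1 ^ 2)"
proof (rule central_fourth_moment_le_of_levels)
  define P where "P j k = gc_mean E \<mu> (\<lambda>n. real (n j) * real (Ntot n) ^ k)" for j k
  have mom: "gc_summable E \<mu> (\<lambda>n. real (Ntot n) ^ Suc k)" if "k \<le> 3" for k
    using gc_summable_Ntot_power[OF Z_fin mom_fin, of "Suc k"] that by simp
  have rec: "P j k = P j 0 * ((\<Sum>i<k. real (k choose i) * P j i) + (\<Sum>i\<le>k. real (k choose i) * M i))"
    if "k \<le> 3" for j k
    using gc_mean_level_moment_recursion[OF Z_fin mom[OF that]] by (simp add: P_def M_def)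
  have "M 0 = 1"
    using gc_mean_one[OF Z_fin] by (simp add: M_def)
  then show "P j 1 = P j 0 * (P j 0 + M 1 + 1)"
    and "P j 2 = P j 0 * (2 * P j 1 + P j 0 + M 2 + 2 * M 1 + 1)"
    and "P j 3 = P j 0 * (3 * P j 2 + 3 * P j 1 + P j 0 + M 3 + 3 * M 2 + 3 * M 1 + 1)" for j
    using rec[of 1 j] rec[of 2 j] rec[of 3 j]
    by (simp_all add: numeral_eq_Suc binomial_Suc_Suc algebra_simps)
  show "0 \<le> P j 0" for j
    unfolding P_def by (rule gc_mean_nonneg) simp
  have sums: "((\<lambda>j. P j k) has_sum M (Suc k)) UNIV" if "k \<le> 3" for k
    using gc_mean_level_has_sum[OF mom[OF that]] by (simp add: P_def M_def)
  from sums[of 0] sums[of 1] sums[of 2] sums[of 3]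
  show "((\<lambda>j. P j 0) has_sum M 1) UNIV" "((\<lambda>j. P j 1) has_sum M 2) UNIV"
    "((\<lambda>j. P j 2) has_sum M 3) UNIV" "((\<lambda>j. P j 3) has_sum M 4) UNIV"
    by (simp_all add: numeral_eq_Suc)
qed

theorem lemmaA5:
  fixes E :: "nat \<Rightarrow> real" and \<mu> :: real
  assumes E_mono: "mono E"
    and E_nonneg: "\<And>j. E j \<ge> 0"
    and mu_lt: "\<mu> < E 0"
    and Z_fin: "gibbs_weight E \<mu> summable_on occ_configs"
    and mom_fin: "(\<lambda>n. gibbs_weight E \<mu> n * real (Ntot n) ^ 4) summable_on occ_configs"
  shows "let Nbar = gc_expect E \<mu> (\<lambda>x. x) in
         gc_expect E \<mu> (\<lambda>x. (x - Nbar) ^ 4)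
           \<le> 9 * (gc_expect E \<mu> (\<lambda>x. (x - Nbar) ^ 2)) ^ 2 + gc_expect E \<mu> (\<lambda>x. (x - Nbar) ^ 2)"
proof -
  define M where "M k = gc_mean E \<mu> (\<lambda>n. real (Ntot n) ^ k)" for k
  have central: "gc_expect E \<mu> (\<lambda>x. (x - a) ^ K) = (\<Sum>i\<le>K. real (K choose i) * (- a) ^ (K - i) * M i)"
    if "K \<le> 4" for K a
    using gc_expect_power_diff[OF Z_fin gc_summable_Ntot_power[OF Z_fin mom_fin that]] by (simp add: M_def)
  have "M 0 = 1"
    using gc_mean_one[OF Z_fin] by (simp add: M_def)
  then have "gc_expect E \<mu> (\<lambda>x. (x - M 1) ^ 4) = M 4 - 4 * M 1 * M 3 + 6 * M 1 ^ 2 * M 2 - 3 * M 1 ^ 4"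
    and "gc_expect E \<mu> (\<lambda>x. (x - M 1) ^ 2) = M 2 - M 1 ^ 2"
    using central[of 4 "M 1"] central[of 2 "M 1"]
    by (simp_all add: numeral_eq_Suc binomial_Suc_Suc algebra_simps)
  moreover have "gc_expect E \<mu> (\<lambda>x. x) = M 1"
    by (simp add: gc_expect_eq_gc_mean M_def)
  ultimately show ?thesis
    using gc_central_fourth_moment_le[OF Z_fin mom_fin] by (simp add: Let_def M_def)
qed

end
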